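(* The matrix $B^*_0$ is positive definite, i.e. all its eigenvalues are strictly positive.
   Context: Fix integers $d,M\ge1$. The activation $\sigma:\mathbb R\to\mathbb R$ is differentiable, non-polynomial, bounded and Lipschitz, with $\sigma'$ bounded and Lipschitz. The points $x^1,\dots,x^M\in\mathbb R^d$ are nonzero, bounded, and the lines $\{\xi x^m:\xi\in\mathbb R\}$ pairwise meet only at the origin. $\mu_0$ is a probability measure on $\mathbb R\times\mathbb R^d\times\mathbb R$ (variables $(c,w,\eta)$) under which $c$ is independent of $(w,\eta)$, $c$ is mean zero with compact support, and the law of $(w,\eta)$ assigns positive probability to every set of positive Lebesgue measure. $(B^*_0)_{mn}=\frac1M\int[\sigma(w\cdot x^m+\eta)\sigma(w\cdot x^n+\eta)+c^2\sigma'(w\cdot x^m+\eta)\sigma'(w\cdot x^n+\eta)(x^m\cdot x^n+1)]\,d\mu_0(c,w,\eta)$. *)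

theory Defs
  imports "HOL-Probability.Probability" "HOL-Computational_Algebra.Polynomial"
begin

text \<open>The matrix B*_0, indexed by the finite type 'm (with M = CARD('m));
  points x m in real^'d; mu0 a measure on (c, w, eta).\<close>
definition Bstar0 ::
  "(real \<Rightarrow> real) \<Rightarrow> ('m::finite \<Rightarrow> real^'d::finite) \<Rightarrow> (real \<times> (real^'d) \<times> real) measure \<Rightarrow> real^'m^'m"
  where "Bstar0 \<sigma> x \<mu> = (\<chi> m n. (1 / real CARD('m)) *
     integral\<^sup>L \<mu> (\<lambda>(c, w, \<eta>).
        \<sigma> (w \<bullet> x m + \<eta>) * \<sigma> (w \<bullet> x n + \<eta>)
        + c\<^sup>2 * deriv \<sigma> (w \<bullet> x m + \<eta>) * deriv \<sigma> (w \<bullet> x n + \<eta>) * (x m \<bullet> x n + 1)))"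

definition pos_definite :: "real^'n::finite^'n \<Rightarrow> bool"
  where "pos_definite A \<longleftrightarrow> (\<forall>v. v \<noteq> 0 \<longrightarrow> v \<bullet> (A *v v) > 0)"

end

theory Submission
  imports Defs
begin

(* Dropping the nonnegative c\<^sup>2-part of the integrand, v \<bullet> (B v) is at least the mean
   square of the ridge combination F(w, \<eta>) = \<Sum>m. v\<^sub>m \<sigma>(w \<bullet> x\<^sub>m + \<eta>), a continuous
   function of (w, \<eta>).
   Since the law of (w, \<eta>) charges every open set, the mean square vanishes only if
   F \<equiv> 0. For distinct x\<^sub>m and bounded profiles f\<^sub>m, the identity \<Sum>m. f\<^sub>m(w \<bullet> x\<^sub>m + \<eta>) = 0
   forces every f\<^sub>m to be constant, by induction on the number of ridges: moving (w, \<eta>)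
   along a direction that fixes one ridge argument turns the increments of the others
   into a shorter identity of the same kind, and a bounded function with shift-invariant
   increments is constant. So F \<equiv> 0 with v \<noteq> 0 would make \<sigma> constant, hence polynomial. *)

lemma bounded_uniform_increments_imp_constant:
  fixes f :: "real \<Rightarrow> real"
  assumes bounded: "bounded (range f)"
    and increments: "\<And>\<delta> s t. f (s + \<delta>) - f s = f (t + \<delta>) - f t"
  shows "f s = f t"
proof -
  obtain B where B: "\<And>y. \<bar>f y\<bar> \<le> B" using bounded unfolding bounded_iff by auto
  define \<delta> where "\<delta> = t - s"
  define c where "c = f (s + \<delta>) - f s"
  have multiple: "f (s + real n * \<delta>) = f s + real n * c" for n
  proof (induction n)
    case 0
    then show ?case by simp
  next
    case (Suc n)
    have "f (s + real (Suc n) * \<delta>) = f (s + real n * \<delta> + \<delta>)"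
      by (simp add: algebra_simps)
    also have "\<dots> = f (s + real n * \<delta>) + c"
      using increments[of "s + real n * \<delta>" \<delta> s] unfolding c_def by linarith
    finally show ?case using Suc by (simp add: algebra_simps)
  qed
  have "c = 0"
  proof (rule ccontr)
    assume "c \<noteq> 0"
    obtain n :: nat where "real n > 2 * B / \<bar>c\<bar>" using reals_Archimedean2 by blast
    then have "real n * \<bar>c\<bar> > 2 * B" using \<open>c \<noteq> 0\<close> by (simp add: field_simps)
    moreover have "\<bar>real n * c\<bar> \<le> 2 * B"
      using B[of "s + real n * \<delta>"] B[of s] multiple[of n] by linarith
    ultimately show False by (simp add: abs_mult)
  qed
  then show ?thesis unfolding c_def \<delta>_def by simp
qed

lemma bounded_range_increment:
  fixes f :: "real \<Rightarrow> real"
  assumes "bounded (range f)"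
  shows "bounded (range (\<lambda>r. f (r + h) - f r))"
proof -
  obtain B where B: "\<And>y. \<bar>f y\<bar> \<le> B" using assms unfolding bounded_iff by auto
  have "\<bar>f (r + h) - f r\<bar> \<le> 2 * B" for r using B[of r] B[of "r + h"] by linarith
  then show ?thesis unfolding bounded_iff by auto
qed

(* The substitution (w, \<eta>) \<mapsto> (w + z, \<eta> - z \<bullet> p a) fixes the argument of the a-th ridge. *)
lemma ridge_sum_increments_eq_0:
  fixes p :: "'i \<Rightarrow> 'a::real_inner" and f :: "'i \<Rightarrow> real \<Rightarrow> real"
  assumes "finite S" "a \<notin> S"
    and sum_eq_0: "\<And>w \<eta>. (\<Sum>n\<in>insert a S. f n (w \<bullet> p n + \<eta>)) = 0"
  shows "(\<Sum>n\<in>S. f n (w \<bullet> p n + \<eta> + z \<bullet> (p n - p a)) - f n (w \<bullet> p n + \<eta>)) = 0"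
proof -
  have shifted: "(w + z) \<bullet> p n + (\<eta> - z \<bullet> p a) = w \<bullet> p n + \<eta> + z \<bullet> (p n - p a)" for n
    by (simp add: inner_add_left inner_diff_right)
  have "f a (w \<bullet> p a + \<eta>) + (\<Sum>n\<in>S. f n (w \<bullet> p n + \<eta> + z \<bullet> (p n - p a))) = 0"
    using sum_eq_0[of "w + z" "\<eta> - z \<bullet> p a"] assms(1,2) by (simp add: shifted)
  moreover have "f a (w \<bullet> p a + \<eta>) + (\<Sum>n\<in>S. f n (w \<bullet> p n + \<eta>)) = 0"
    using sum_eq_0[of w \<eta>] assms(1,2) by simp
  ultimately show ?thesis by (simp add: sum_subtractf)
qed

lemma ridge_sum_eq_0_imp_constant:
  fixes p :: "'i \<Rightarrow> 'a::real_inner" and f :: "'i \<Rightarrow> real \<Rightarrow> real"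
  assumes "finite S" "inj_on p S"
    and "\<And>n. n \<in> S \<Longrightarrow> bounded (range (f n))"
    and "\<And>w \<eta>. (\<Sum>n\<in>S. f n (w \<bullet> p n + \<eta>)) = 0"
    and "m \<in> S"
  shows "f m s = f m t"
  using assms
proof (induction S arbitrary: f m s t rule: finite_induct)
  case empty
  then show ?case by simp
next
  case (insert a S)
  have constant_on_S: "f m s = f m t" if "m \<in> S" for m s t
  proof (rule bounded_uniform_increments_imp_constant[of "f m"])
    show "bounded (range (f m))" using insert.prems(2) that by simp
  next
    fix \<delta> s t
    define q where "q = p m - p a"
    have "q \<noteq> 0" using insert.prems(1) insert.hyps(2) that by (auto simp: q_def inj_on_def)
    define z where "z = (\<delta> / (q \<bullet> q)) *\<^sub>R q"
    have z: "z \<bullet> (p m - p a) = \<delta>" using \<open>q \<noteq> 0\<close> by (simp add: z_def q_def)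
    define g where "g n r = f n (r + z \<bullet> (p n - p a)) - f n r" for n r
    have "g m s = g m t"
    proof (rule insert.IH[where f = g])
      show "inj_on p S" using insert.prems(1) by (simp add: inj_on_insert)
      show "bounded (range (g n))" if "n \<in> S" for n
        unfolding g_def using insert.prems(2) that by (simp add: bounded_range_increment)
      show "(\<Sum>n\<in>S. g n (w \<bullet> p n + \<eta>)) = 0" for w \<eta>
        unfolding g_def
        using ridge_sum_increments_eq_0[where f = f and p = p, OF insert.hyps insert.prems(3)] .
    qed (use that in simp)
    then show "f m (s + \<delta>) - f m s = f m (t + \<delta>) - f m t" by (simp add: g_def z)
  qed
  have "f a s = f a t" for s t
  proof -
    have "f a r + (\<Sum>n\<in>S. f n r) = 0" for r
      using insert.prems(3)[of 0 r] insert.hyps by simp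
    moreover have "(\<Sum>n\<in>S. f n s) = (\<Sum>n\<in>S. f n t)"
      using constant_on_S by (intro sum.cong) auto
    ultimately show ?thesis by (metis add_right_cancel)
  qed
  then show ?case using constant_on_S insert.prems(4) by blast
qed

definition ridge_combination ::
  "(real \<Rightarrow> real) \<Rightarrow> ('m::finite \<Rightarrow> 'a::real_inner) \<Rightarrow> real^'m \<Rightarrow> 'a \<times> real \<Rightarrow> real"
  where "ridge_combination \<sigma> x v = (\<lambda>(w, \<eta>). \<Sum>m\<in>UNIV. v $ m * \<sigma> (w \<bullet> x m + \<eta>))"

definition Bstar0_integrand ::
  "(real \<Rightarrow> real) \<Rightarrow> ('m \<Rightarrow> 'a::real_inner) \<Rightarrow> 'm \<Rightarrow> 'm \<Rightarrow> real \<times> 'a \<times> real \<Rightarrow> real"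
  where "Bstar0_integrand \<sigma> x m n = (\<lambda>(c, w, \<eta>).
     \<sigma> (w \<bullet> x m + \<eta>) * \<sigma> (w \<bullet> x n + \<eta>)
     + c\<^sup>2 * deriv \<sigma> (w \<bullet> x m + \<eta>) * deriv \<sigma> (w \<bullet> x n + \<eta>) * (x m \<bullet> x n + 1))"

lemma Bstar0_eq_integral_integrand:
  fixes x :: "'m::finite \<Rightarrow> real^'d::finite"
  shows "Bstar0 \<sigma> x \<mu> = (\<chi> m n. (1 / real CARD('m)) * integral\<^sup>L \<mu> (Bstar0_integrand \<sigma> x m n))"
  unfolding Bstar0_def Bstar0_integrand_def ..

lemma ridge_combination_not_identically_0:
  fixes x :: "'m::finite \<Rightarrow> 'a::real_inner"
  assumes "inj x" "bounded (range \<sigma>)" "\<sigma> s \<noteq> \<sigma> t" "v \<noteq> 0"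
  obtains y where "ridge_combination \<sigma> x v y \<noteq> 0"
proof -
  obtain i where "v $ i \<noteq> 0" using \<open>v \<noteq> 0\<close> by (metis vec_eq_iff zero_index)
  have "\<not> (\<forall>w \<eta>. ridge_combination \<sigma> x v (w, \<eta>) = 0)"
  proof
    assume "\<forall>w \<eta>. ridge_combination \<sigma> x v (w, \<eta>) = 0"
    then have "v $ i * \<sigma> s = v $ i * \<sigma> t"
    proof (intro ridge_sum_eq_0_imp_constant[where f = "\<lambda>m r. v $ m * \<sigma> r" and p = x])
      show "bounded (range (\<lambda>r. v $ m * \<sigma> r))" for m
        using bounded_scaling[OF \<open>bounded (range \<sigma>)\<close>, of "v $ m"] by (simp add: image_image)
    qed (use \<open>inj x\<close> in \<open>auto simp: ridge_combination_def\<close>)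
    then show False using \<open>v $ i \<noteq> 0\<close> \<open>\<sigma> s \<noteq> \<sigma> t\<close> by simp
  qed
  then show ?thesis using that by blast
qed

lemma continuous_on_ridge_combination:
  assumes "continuous_on UNIV \<sigma>"
  shows "continuous_on UNIV (ridge_combination \<sigma> x v)"
  unfolding ridge_combination_def split_beta'
  by (intro continuous_intros continuous_on_compose2[OF assms]) auto

lemma gram_quadratic_form_eq:
  fixes u s d :: "'i \<Rightarrow> real" and x :: "'i \<Rightarrow> 'a::real_inner"
  shows "(\<Sum>i\<in>I. \<Sum>j\<in>I. u i * u j * (s i * s j + c\<^sup>2 * d i * d j * (x i \<bullet> x j + 1)))
    = (\<Sum>i\<in>I. u i * s i)\<^sup>2 + c\<^sup>2 * ((norm (\<Sum>i\<in>I. (u i * d i) *\<^sub>R x i))\<^sup>2 + (\<Sum>i\<in>I. u i * d i)\<^sup>2)"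
  unfolding power2_norm_eq_inner unfolding power2_eq_square
  by (simp add: inner_sum_left inner_sum_right sum_distrib_left sum_distrib_right sum.distrib
      algebra_simps)
    (intro sum.cong refl, subst inner_commute, rule refl)

lemma ridge_combination_square_le_integrand_form:
  "(ridge_combination \<sigma> x v (w, \<eta>))\<^sup>2
     \<le> (\<Sum>i\<in>UNIV. \<Sum>j\<in>UNIV. v $ i * v $ j * Bstar0_integrand \<sigma> x i j (c, w, \<eta>))"
  unfolding ridge_combination_def Bstar0_integrand_def
  using gram_quadratic_form_eq[where u = "\<lambda>i. v $ i" and s = "\<lambda>i. \<sigma> (w \<bullet> x i + \<eta>)"
      and d = "\<lambda>i. deriv \<sigma> (w \<bullet> x i + \<eta>)" and x = x and I = UNIV and c = c]
  by simp

lemma integrable_continuous_AE_bounded: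
  fixes f :: "'a::topological_space \<Rightarrow> real"
  assumes "finite_measure M" "sets M = sets borel" "continuous_on UNIV f"
    and "AE z in M. \<bar>f z\<bar> \<le> C"
  shows "integrable M f"
proof (rule finite_measure.integrable_const_bound[OF \<open>finite_measure M\<close>])
  show "AE z in M. norm (f z) \<le> C" using assms(4) by simp
  have "f \<in> borel_measurable borel" using assms(3) by (rule borel_measurable_continuous_onI)
  then show "f \<in> borel_measurable M" using measurable_cong_sets[OF assms(2) refl[of "sets (borel :: real measure)"]] by simp
qed

lemma integrable_ridge_combination_square:
  fixes \<mu> :: "(real \<times> 'a::real_inner \<times> real) measure"
  assumes "finite_measure \<mu>" "sets \<mu> = sets borel"
    and "continuous_on UNIV \<sigma>" "bounded (range \<sigma>)"
  shows "integrable \<mu> (\<lambda>z. (ridge_combination \<sigma> x v (snd z))\<^sup>2)"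
proof -
  obtain S where S: "\<And>r. \<bar>\<sigma> r\<bar> \<le> S" using assms(4) unfolding bounded_iff by auto
  have bound: "\<bar>ridge_combination \<sigma> x v y\<bar> \<le> (\<Sum>m\<in>UNIV. \<bar>v $ m\<bar> * S)" for y
    unfolding ridge_combination_def split_beta'
    by (rule order_trans[OF sum_abs sum_mono]) (simp add: abs_mult mult_left_mono S)
  show ?thesis
  proof (rule integrable_continuous_AE_bounded[OF assms(1,2)])
    show "continuous_on UNIV (\<lambda>z. (ridge_combination \<sigma> x v (snd z))\<^sup>2)"
      by (intro continuous_on_power continuous_on_compose2[OF continuous_on_ridge_combination]
          continuous_on_snd continuous_on_id assms(3)) auto
    show "AE z in \<mu>. \<bar>(ridge_combination \<sigma> x v (snd z))\<^sup>2\<bar> \<le> (\<Sum>m\<in>UNIV. \<bar>v $ m\<bar> * S)\<^sup>2"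
      using power_mono[OF bound abs_ge_zero, of _ 2] by simp
  qed
qed

lemma integrable_Bstar0_integrand:
  fixes \<mu> :: "(real \<times> 'a::real_inner \<times> real) measure"
  assumes "finite_measure \<mu>" "sets \<mu> = sets borel"
    and "continuous_on UNIV \<sigma>" "continuous_on UNIV (deriv \<sigma>)"
    and "bounded (range \<sigma>)" "bounded (range (deriv \<sigma>))"
    and "AE z in \<mu>. \<bar>fst z\<bar> \<le> R"
  shows "integrable \<mu> (Bstar0_integrand \<sigma> x m n)"
proof -
  obtain S where S: "\<And>r. \<bar>\<sigma> r\<bar> \<le> S" using assms(5) unfolding bounded_iff by auto
  obtain D where D: "\<And>r. \<bar>deriv \<sigma> r\<bar> \<le> D" using assms(6) unfolding bounded_iff by auto
  have bound: "\<bar>Bstar0_integrand \<sigma> x m n (c, w, \<eta>)\<bar> \<le> S * S + R\<^sup>2 * (D * D) * (\<bar>x m \<bullet> x n\<bar> + 1)"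
    if "\<bar>c\<bar> \<le> R" for c w \<eta>
  proof -
    have "\<bar>\<sigma> (w \<bullet> x m + \<eta>) * \<sigma> (w \<bullet> x n + \<eta>)\<bar> \<le> S * S"
      unfolding abs_mult by (rule mult_mono[OF S S]) (use S[of 0] in auto)
    moreover have "c\<^sup>2 \<le> R\<^sup>2" using power_mono[OF that abs_ge_zero, of 2] by simp
    moreover have "\<bar>deriv \<sigma> (w \<bullet> x m + \<eta>) * deriv \<sigma> (w \<bullet> x n + \<eta>)\<bar> \<le> D * D"
      unfolding abs_mult by (rule mult_mono[OF D D]) (use D[of 0] in auto)
    ultimately have "\<bar>c\<^sup>2 * (deriv \<sigma> (w \<bullet> x m + \<eta>) * deriv \<sigma> (w \<bullet> x n + \<eta>)) * (x m \<bullet> x n + 1)\<bar>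
        \<le> R\<^sup>2 * (D * D) * (\<bar>x m \<bullet> x n\<bar> + 1)"
      unfolding abs_mult[of _ "x m \<bullet> x n + 1"] abs_mult[of "c\<^sup>2"]
      by (intro mult_mono) auto
    with \<open>\<bar>\<sigma> _ * \<sigma> _\<bar> \<le> S * S\<close> show ?thesis
      unfolding Bstar0_integrand_def by (simp add: mult.assoc)
  qed
  show ?thesis
  proof (rule integrable_continuous_AE_bounded[OF assms(1,2)])
    show "continuous_on UNIV (Bstar0_integrand \<sigma> x m n)"
      unfolding Bstar0_integrand_def split_beta'
      by (intro continuous_intros continuous_on_compose2[OF assms(3)]
          continuous_on_compose2[OF assms(4)]) auto
    show "AE z in \<mu>. \<bar>Bstar0_integrand \<sigma> x m n z\<bar> \<le> S * S + R\<^sup>2 * (D * D) * (\<bar>x m \<bullet> x n\<bar> + 1)"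
      using assms(7) by (rule eventually_mono) (use bound in auto)
  qed
qed

lemma quadratic_form_Bstar0:
  fixes x :: "'m::finite \<Rightarrow> real^'d::finite"
  assumes "\<And>m n. integrable \<mu> (Bstar0_integrand \<sigma> x m n)"
  shows "v \<bullet> (Bstar0 \<sigma> x \<mu> *v v)
    = (1 / real CARD('m)) * (\<integral>z. (\<Sum>i\<in>UNIV. \<Sum>j\<in>UNIV. v $ i * v $ j * Bstar0_integrand \<sigma> x i j z) \<partial>\<mu>)"
proof -
  have "v \<bullet> (Bstar0 \<sigma> x \<mu> *v v) = (\<Sum>i\<in>UNIV. \<Sum>j\<in>UNIV. v $ i * v $ j * Bstar0 \<sigma> x \<mu> $ i $ j)"
    by (simp add: inner_vec_def matrix_vector_mult_def sum_distrib_left mult_ac)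
  also have "\<dots> = (1 / real CARD('m)) *
      (\<Sum>i\<in>UNIV. \<Sum>j\<in>UNIV. \<integral>z. v $ i * v $ j * Bstar0_integrand \<sigma> x i j z \<partial>\<mu>)"
    by (simp add: Bstar0_eq_integral_integrand sum_distrib_left mult_ac)
  also have "\<dots> = (1 / real CARD('m)) *
      (\<integral>z. (\<Sum>i\<in>UNIV. \<Sum>j\<in>UNIV. v $ i * v $ j * Bstar0_integrand \<sigma> x i j z) \<partial>\<mu>)"
    using assms by (simp add: Bochner_Integration.integral_sum Bochner_Integration.integrable_sum)
  finally show ?thesis .
qed

lemma Bstar0_quadratic_form_ge:
  fixes x :: "'m::finite \<Rightarrow> real^'d::finite"
  assumes "\<And>m n. integrable \<mu> (Bstar0_integrand \<sigma> x m n)"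
    and "integrable \<mu> (\<lambda>z. (ridge_combination \<sigma> x v (snd z))\<^sup>2)"
  shows "(1 / real CARD('m)) * (\<integral>z. (ridge_combination \<sigma> x v (snd z))\<^sup>2 \<partial>\<mu>) \<le> v \<bullet> (Bstar0 \<sigma> x \<mu> *v v)"
proof -
  have "(\<integral>z. (ridge_combination \<sigma> x v (snd z))\<^sup>2 \<partial>\<mu>)
      \<le> (\<integral>z. (\<Sum>i\<in>UNIV. \<Sum>j\<in>UNIV. v $ i * v $ j * Bstar0_integrand \<sigma> x i j z) \<partial>\<mu>)"
  proof (rule integral_mono[OF assms(2)])
    show "integrable \<mu> (\<lambda>z. \<Sum>i\<in>UNIV. \<Sum>j\<in>UNIV. v $ i * v $ j * Bstar0_integrand \<sigma> x i j z)"
      using assms(1) by (intro Bochner_Integration.integrable_sum) simp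
    show "(ridge_combination \<sigma> x v (snd z))\<^sup>2
        \<le> (\<Sum>i\<in>UNIV. \<Sum>j\<in>UNIV. v $ i * v $ j * Bstar0_integrand \<sigma> x i j z)" for z
      using ridge_combination_square_le_integrand_form[where c = "fst z"]
      by (cases z) auto
  qed
  then show ?thesis
    unfolding quadratic_form_Bstar0[OF assms(1)] by (simp add: divide_right_mono)
qed

lemma emeasure_lborel_open_pos:
  fixes U :: "'a::euclidean_space set"
  assumes "open U" "U \<noteq> {}"
  shows "0 < emeasure lborel U"
proof (rule ccontr)
  assume "\<not> 0 < emeasure lborel U"
  then have "U \<in> null_sets lborel" using borel_open[OF \<open>open U\<close>] by (simp add: null_sets_def)
  then have "negligible U" by (simp add: negligible_iff_null_sets null_sets_completionI)
  then show False using open_not_negligible[OF assms] by simp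
qed

lemma integral_continuous_nonneg_pos:
  fixes T :: "'a \<Rightarrow> 'b::euclidean_space" and h :: "'b \<Rightarrow> real"
  assumes T: "T \<in> measurable M borel"
    and charges: "\<And>A. A \<in> sets borel \<Longrightarrow> emeasure lborel A > 0 \<Longrightarrow> measure M (T -` A \<inter> space M) > 0"
    and "continuous_on UNIV h" "\<And>y. 0 \<le> h y" "h y\<^sub>0 \<noteq> 0"
    and integrable: "integrable M (\<lambda>z. h (T z))"
  shows "integral\<^sup>L M (\<lambda>z. h (T z)) > 0"
proof -
  define U where "U = {y. h y \<noteq> 0}"
  have "open U" unfolding U_def by (rule open_Collect_neq[OF assms(3) continuous_on_const])
  then have U: "U \<in> sets borel" by (rule borel_open)
  have "U \<noteq> {}" using assms(5) unfolding U_def by blast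
  have "measure M (T -` U \<inter> space M) > 0"
    using charges[OF U emeasure_lborel_open_pos[OF \<open>open U\<close> \<open>U \<noteq> {}\<close>]] .
  moreover have "{z \<in> space M. \<not> h (T z) = 0} = T -` U \<inter> space M" unfolding U_def by blast
  ultimately have "\<not> (AE z in M. h (T z) = 0)"
    using AE_iff_measurable[OF measurable_sets[OF T U]] by (auto simp: measure_def)
  moreover have nonneg: "AE z in M. 0 \<le> h (T z)" using assms(4) by simp
  ultimately have "integral\<^sup>L M (\<lambda>z. h (T z)) \<noteq> 0"
    using integral_nonneg_eq_0_iff_AE[OF integrable nonneg] by simp
  moreover have "0 \<le> integral\<^sup>L M (\<lambda>z. h (T z))" by (rule integral_nonneg_AE[OF nonneg])
  ultimately show ?thesis by linarith
qed

lemma Bstar0_pos_definite: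
  fixes x :: "'m::finite \<Rightarrow> real^'d::finite" and \<mu> :: "(real \<times> (real^'d) \<times> real) measure"
  assumes finite: "finite_measure \<mu>" and sets: "sets \<mu> = sets borel"
    and cont: "continuous_on UNIV \<sigma>" "continuous_on UNIV (deriv \<sigma>)"
    and bounded: "bounded (range \<sigma>)" "bounded (range (deriv \<sigma>))"
    and "\<sigma> s \<noteq> \<sigma> t" "inj x"
    and c_bounded: "AE z in \<mu>. \<bar>fst z\<bar> \<le> R"
    and charges: "\<And>A. A \<in> sets (borel :: ((real^'d) \<times> real) measure) \<Longrightarrow> emeasure lborel A > 0 \<Longrightarrow>
                   measure \<mu> (snd -` A \<inter> space \<mu>) > 0"
  shows "pos_definite (Bstar0 \<sigma> x \<mu>)"
  unfolding pos_definite_def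
proof (intro allI impI)
  fix v :: "real^'m"
  assume "v \<noteq> 0"
  let ?F = "ridge_combination \<sigma> x v"
  obtain y\<^sub>0 where "?F y\<^sub>0 \<noteq> 0"
    using ridge_combination_not_identically_0[OF \<open>inj x\<close> bounded(1) \<open>\<sigma> s \<noteq> \<sigma> t\<close> \<open>v \<noteq> 0\<close>] .
  have snd: "snd \<in> measurable \<mu> borel"
    using measurable_cong_sets[OF sets refl[of "sets (borel :: ((real^'d) \<times> real) measure)"]]
      borel_measurable_continuous_onI[OF continuous_on_snd[OF continuous_on_id]]
    by simp
  have "0 < (\<integral>z. (?F (snd z))\<^sup>2 \<partial>\<mu>)"
  proof (rule integral_continuous_nonneg_pos[OF snd charges])
    show "continuous_on UNIV (\<lambda>y. (?F y)\<^sup>2)"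
      by (intro continuous_on_power continuous_on_ridge_combination cont(1))
    show "(?F y\<^sub>0)\<^sup>2 \<noteq> 0" using \<open>?F y\<^sub>0 \<noteq> 0\<close> by simp
    show "integrable \<mu> (\<lambda>z. (?F (snd z))\<^sup>2)"
      by (rule integrable_ridge_combination_square[OF finite sets cont(1) bounded(1)])
  qed simp_all
  then have "0 < (1 / real CARD('m)) * (\<integral>z. (?F (snd z))\<^sup>2 \<partial>\<mu>)" by simp
  also have "\<dots> \<le> v \<bullet> (Bstar0 \<sigma> x \<mu> *v v)"
    by (rule Bstar0_quadratic_form_ge
        integrable_Bstar0_integrand[OF finite sets cont bounded c_bounded]
        integrable_ridge_combination_square[OF finite sets cont(1) bounded(1)])+
  finally show "v \<bullet> (Bstar0 \<sigma> x \<mu> *v v) > 0" .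
qed

lemma pos_definite_eigenvalue_pos:
  assumes "pos_definite A" "v \<noteq> 0" "A *v v = l *\<^sub>R v"
  shows "l > 0"
proof -
  have "0 < v \<bullet> (A *v v)" using assms(1,2) unfolding pos_definite_def by blast
  also have "\<dots> = l * (v \<bullet> v)" using assms(3) by simp
  finally show ?thesis using inner_ge_zero[of v] by (auto simp: zero_less_mult_iff)
qed

theorem mainTheorem8:
  fixes \<sigma> :: "real \<Rightarrow> real"
    and x :: "'m::finite \<Rightarrow> real^'d::finite"
    and \<mu>0 :: "(real \<times> (real^'d) \<times> real) measure"
  assumes sigma_diff: "\<And>t. \<sigma> differentiable at t"
    and sigma_nonpoly: "\<not> (\<exists>p :: real poly. \<forall>t. \<sigma> t = poly p t)"
    and sigma_bdd: "bounded (range \<sigma>)"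
    and sigma_lip: "\<exists>L. L-lipschitz_on UNIV \<sigma>"
    and dsigma_bdd: "bounded (range (deriv \<sigma>))"
    and dsigma_lip: "\<exists>L. L-lipschitz_on UNIV (deriv \<sigma>)"
    and x_nonzero: "\<And>m. x m \<noteq> 0"
    and x_bdd: "bounded (range x)"
    and x_lines: "\<And>m n \<xi> \<zeta>. m \<noteq> n \<Longrightarrow> \<xi> *\<^sub>R x m = \<zeta> *\<^sub>R x n \<Longrightarrow> \<xi> *\<^sub>R x m = 0"
    and mu_prob: "prob_space \<mu>0"
    and mu_sets: "sets \<mu>0 = sets borel"
    and c_indep: "prob_space.indep_set \<mu>0
       {fst -` A \<inter> space \<mu>0 | A. A \<in> sets (borel :: real measure)}
       {snd -` B \<inter> space \<mu>0 | B. B \<in> sets (borel :: ((real^'d) \<times> real) measure)}"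
    and c_integrable: "integrable \<mu>0 fst"
    and c_mean: "integral\<^sup>L \<mu>0 fst = 0"
    and c_supp: "\<exists>K. compact K \<and> (AE z in \<mu>0. fst z \<in> K)"
    and wn_pos: "\<And>A. A \<in> sets (borel :: ((real^'d) \<times> real) measure) \<Longrightarrow> emeasure lborel A > 0 \<Longrightarrow>
                   measure \<mu>0 (snd -` A \<inter> space \<mu>0) > 0"
  shows "pos_definite (Bstar0 \<sigma> x \<mu>0) \<and>
         (\<forall>(l::real) v. v \<noteq> 0 \<and> Bstar0 \<sigma> x \<mu>0 *v v = l *\<^sub>R v \<longrightarrow> l > 0)"
proof -
  have "finite_measure \<mu>0" using mu_prob by (simp add: prob_space_def)
  have cont: "continuous_on UNIV \<sigma>" "continuous_on UNIV (deriv \<sigma>)"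
    using sigma_lip dsigma_lip lipschitz_on_continuous_on by blast+
  obtain K where K: "compact K" "AE z in \<mu>0. fst z \<in> K" using c_supp by blast
  obtain R where "\<And>c. c \<in> K \<Longrightarrow> \<bar>c\<bar> \<le> R"
    using compact_imp_bounded[OF K(1)] unfolding bounded_iff by auto
  with K(2) have R: "AE z in \<mu>0. \<bar>fst z\<bar> \<le> R" by (auto elim: eventually_mono)
  have "inj x" using x_lines x_nonzero by (metis injI scaleR_one)
  obtain s t where "\<sigma> s \<noteq> \<sigma> t"
  proof (rule ccontr)
    assume "\<not> thesis"
    then have "\<forall>t. \<sigma> t = poly [:\<sigma> 0:] t" using that by auto
    then show False using sigma_nonpoly by blast
  qed
  have "pos_definite (Bstar0 \<sigma> x \<mu>0)"
    by (rule Bstar0_pos_definite[OF \<open>finite_measure \<mu>0\<close> mu_sets cont sigma_bdd dsigma_bdd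
          \<open>\<sigma> s \<noteq> \<sigma> t\<close> \<open>inj x\<close> R wn_pos])
  then show ?thesis using pos_definite_eigenvalue_pos by blast
qed

end
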